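(* Let $m\ge 3$, $n\ge 2$ be integers with $m\ne 2n-1$. Then the squid graph $\mathrm{Sq}(m;1^n)$ is not Schur positive.
   Context: The squid graph $\mathrm{Sq}(m;1^n)$ is obtained from the cycle $C_m$ on $m$ vertices by attaching $n$ new pendant vertices (leaves), each joined by an edge to one common vertex $v_0$ of the cycle. For a finite simple graph $G$, the chromatic symmetric function is $X_G=\sum_{\kappa}\prod_{v\in V(G)}x_{\kappa(v)}$ over proper colorings $\kappa:V(G)\to\{1,2,\dots\}$; $G$ is Schur positive if all coefficients of $X_G$ in the Schur basis are nonnegative. *)

theory Defs
  imports "HOL-Library.FuncSet"
begin

text \<open>Graphs: a finite vertex set V with a symmetric irreflexive adjacency relation E.
Colours are natural numbers (variables x_0, x_1, ...), a harmless relabelling of x_1, x_2, ...\<close>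

definition proper_coloring :: "'a set \<Rightarrow> ('a \<Rightarrow> 'a \<Rightarrow> bool) \<Rightarrow> ('a \<Rightarrow> nat) \<Rightarrow> bool" where
  "proper_coloring V E \<kappa> \<longleftrightarrow> \<kappa> \<in> extensional V \<and> (\<forall>u\<in>V. \<forall>v\<in>V. E u v \<longrightarrow> \<kappa> u \<noteq> \<kappa> v)"

text \<open>Coefficient of the monomial x^alpha (alpha i = exponent of x_i) in X_G.\<close>
definition csf_coeff :: "'a set \<Rightarrow> ('a \<Rightarrow> 'a \<Rightarrow> bool) \<Rightarrow> (nat \<Rightarrow> nat) \<Rightarrow> nat" where
  "csf_coeff V E \<alpha> = card {\<kappa>. proper_coloring V E \<kappa> \<and> (\<forall>i. card {v\<in>V. \<kappa> v = i} = \<alpha> i)}"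

definition is_partition_of :: "nat list \<Rightarrow> nat \<Rightarrow> bool" where
  "is_partition_of lam N \<longleftrightarrow> sorted_wrt (\<ge>) lam \<and> (\<forall>x\<in>set lam. 0 < x) \<and> sum_list lam = N"

definition young_cells :: "nat list \<Rightarrow> (nat \<times> nat) set" where
  "young_cells lam = {(i, j). i < length lam \<and> j < lam ! i}"

definition is_ssyt :: "nat list \<Rightarrow> (nat \<times> nat \<Rightarrow> nat) \<Rightarrow> bool" where
  "is_ssyt lam T \<longleftrightarrow> T \<in> extensional (young_cells lam) \<and>
     (\<forall>i j. (i, j) \<in> young_cells lam \<and> (i, Suc j) \<in> young_cells lam \<longrightarrow> T (i, j) \<le> T (i, Suc j)) \<and>
     (\<forall>i j. (i, j) \<in> young_cells lam \<and> (Suc i, j) \<in> young_cells lam \<longrightarrow> T (i, j) < T (Suc i, j))"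

definition kostka :: "nat list \<Rightarrow> (nat \<Rightarrow> nat) \<Rightarrow> nat" where
  "kostka lam \<alpha> = card {T. is_ssyt lam T \<and> (\<forall>k. card {c\<in>young_cells lam. T c = k} = \<alpha> k)}"

text \<open>Schur positivity: X_G = sum over partitions lambda of |V| of c_lambda s_lambda with all
c_lambda \<ge> 0 (the Schur functions form a basis, so the coefficients are unique).\<close>
definition schur_positive :: "'a set \<Rightarrow> ('a \<Rightarrow> 'a \<Rightarrow> bool) \<Rightarrow> bool" where
  "schur_positive V E \<longleftrightarrow>
     (\<exists>c :: nat list \<Rightarrow> int.
        (\<forall>lam. is_partition_of lam (card V) \<longrightarrow> 0 \<le> c lam) \<and>
        (\<forall>\<alpha>. int (csf_coeff V E \<alpha>) =
              (\<Sum>lam\<in>{lam. is_partition_of lam (card V)}. c lam * int (kostka lam \<alpha>))))"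

text \<open>Squid graph Sq(m;1^n): vertices 0..m+n-1; cycle 0-1-...-(m-1)-0; leaves m..m+n-1 attached to 0.\<close>
definition squid_vertices :: "nat \<Rightarrow> nat \<Rightarrow> nat set" where
  "squid_vertices m n = {..<m + n}"

definition squid_adj :: "nat \<Rightarrow> nat \<Rightarrow> nat \<Rightarrow> nat \<Rightarrow> bool" where
  "squid_adj m n u v \<longleftrightarrow>
     (u < m \<and> v < m \<and> (v = Suc u mod m \<or> u = Suc v mod m)) \<or>
     (u = 0 \<and> m \<le> v \<and> v < m + n) \<or> (v = 0 \<and> m \<le> u \<and> u < m + n)"

end

theory Submission
  imports Defs
begin

(* If X_G = sum_lam c_lam s_lam with all c_lam >= 0, then for every content alpha with
   alpha_1 < alpha_0 the coefficient of x^alpha in X_G is at most that of x^beta, where beta moves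
   one unit of content from color 0 to color 1: turning the last 0 in the first row of a
   semistandard tableau into a 1 injects the tableaux of content alpha into those of content beta,
   so K_{lam,alpha} <= K_{lam,beta}.

   For the squid graph we find alpha with [x^beta] X_G < [x^alpha] X_G. A proper coloring of C_m
   uses no color more than m/2 times, and the color of v_0 does not occur on the leaves, so no
   color used more than m/2 times can sit at v_0. For m = 2k take alpha = (k+n, k); for m = 2k+1
   and n >= k+2 take alpha = (n, k, k+1). In both cases every color of beta is used more than m/2
   times, so [x^beta] = 0 < [x^alpha]. For m = 2k+1 and n <= k take alpha = (k+n, k, 1): color 2
   may sit at any of the m cycle vertices, so [x^alpha] >= m, whereas a coloring of content
   beta = (k+n-1, k+1, 1) has color 2 exactly at v_0 and is determined by the color of v_1 and
   by its unique leaf of color 1, so [x^beta] <= 2n < m. Only m = 2n-1 escapes all three cases. *)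

text \<open>\<open>fibre_card A f\<close> is the content (exponent vector) of a coloring or tableau \<open>f\<close> of \<open>A\<close>.\<close>

abbreviation fibre_card :: "'a set \<Rightarrow> ('a \<Rightarrow> nat) \<Rightarrow> nat \<Rightarrow> nat" where
  "fibre_card A f x \<equiv> card {a\<in>A. f a = x}"

definition transfer_0_1 :: "(nat \<Rightarrow> nat) \<Rightarrow> nat \<Rightarrow> nat" where
  "transfer_0_1 \<alpha> = \<alpha>(0 := \<alpha> 0 - 1, 1 := Suc (\<alpha> 1))"

lemma transfer_0_1_apply:
  "transfer_0_1 \<alpha> x = (if x = 0 then \<alpha> 0 - 1 else if x = 1 then Suc (\<alpha> 1) else \<alpha> x)"
  by (simp add: transfer_0_1_def)

lemma fibre_card_pos:
  assumes "finite A" "a \<in> A"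
  shows "0 < fibre_card A f (f a)"
  using assms by (subst card_gt_0_iff) auto

lemma fibre_card_const: "fibre_card A (\<lambda>_. c) x = (if x = c then card A else 0)"
  by simp

lemma fibre_card_Un:
  assumes "finite A" "finite B" "A \<inter> B = {}"
  shows "fibre_card (A \<union> B) f x = fibre_card A f x + fibre_card B f x"
proof -
  have "{a\<in>A \<union> B. f a = x} = {a\<in>A. f a = x} \<union> {a\<in>B. f a = x}" by blast
  then show ?thesis using assms by (simp add: card_Un_disjoint disjoint_iff)
qed

lemma finite_extensional_with_fibre_cards:
  assumes "finite A"
  shows "finite {f. f \<in> extensional A \<and> (\<forall>x. fibre_card A f x = \<gamma> x)}" (is "finite ?F")
proof (cases "?F = {}")
  case True
  then show ?thesis by (simp only: finite.emptyI)
next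
  case False
  then obtain f where f: "\<forall>x. fibre_card A f x = \<gamma> x" by blast
  have "{x. \<gamma> x \<noteq> 0} \<subseteq> f ` A"
  proof
    fix x assume "x \<in> {x. \<gamma> x \<noteq> 0}"
    then have "{a\<in>A. f a = x} \<noteq> {}" using f by (metis (mono_tags) card.empty mem_Collect_eq)
    then show "x \<in> f ` A" by blast
  qed
  then have supp: "finite {x. \<gamma> x \<noteq> 0}" using assms finite_surj by blast
  have "?F \<subseteq> PiE A (\<lambda>_. {x. \<gamma> x \<noteq> 0})"
  proof
    fix g assume g: "g \<in> ?F"
    have "\<gamma> (g a) \<noteq> 0" if "a \<in> A" for a
      using fibre_card_pos[OF assms that, of g] g by simp
    then show "g \<in> PiE A (\<lambda>_. {x. \<gamma> x \<noteq> 0})" using g by (auto simp: PiE_def)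
  qed
  moreover have "finite (PiE A (\<lambda>_. {x. \<gamma> x \<noteq> 0}))" using assms supp by (rule finite_PiE)
  ultimately show ?thesis by (rule finite_subset)
qed

lemma down_closed_eq_lessThan:
  fixes J :: "nat set"
  assumes "finite J" "\<And>j j'. j \<in> J \<Longrightarrow> j' \<le> j \<Longrightarrow> j' \<in> J"
  shows "J = {..<card J}"
proof -
  have "J \<subseteq> {..<card J}"
  proof
    fix x assume "x \<in> J"
    then have "{..x} \<subseteq> J" using assms(2) by auto
    then have "card {..x} \<le> card J" using assms(1) by (rule card_mono[rotated])
    then show "x \<in> {..<card J}" by simp
  qed
  then show ?thesis using assms(1) by (simp add: card_subset_eq)
qed

lemma finite_young_cells: "finite (young_cells lam)"
proof -
  have "young_cells lam = Sigma {..<length lam} (\<lambda>i. {..<lam ! i})"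
    by (auto simp: young_cells_def)
  then show ?thesis by simp
qed

lemma young_cells_left_closed: "(i, j) \<in> young_cells lam \<Longrightarrow> j' \<le> j \<Longrightarrow> (i, j') \<in> young_cells lam"
  by (auto simp: young_cells_def)

lemma young_cells_up_closed:
  assumes "is_partition_of lam N" "(i, j) \<in> young_cells lam" "i' \<le> i"
  shows "(i', j) \<in> young_cells lam"
proof -
  have "i < length lam" "j < lam ! i" using assms(2) by (auto simp: young_cells_def)
  moreover have "lam ! i \<le> lam ! i'"
    using assms(1,3) \<open>i < length lam\<close>
    by (cases "i' = i") (auto simp: is_partition_of_def sorted_wrt_iff_nth_less)
  ultimately show ?thesis using assms(3) by (auto simp: young_cells_def)
qed

lemma ssyt_row_mono:
  assumes "is_ssyt lam T" "(i, j) \<in> young_cells lam" "j' \<le> j"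
  shows "T (i, j') \<le> T (i, j)"
  using assms(2,3)
proof (induction j)
  case (Suc j)
  show ?case
  proof (cases "j' = Suc j")
    case False
    have cell: "(i, j) \<in> young_cells lam" using young_cells_left_closed[OF Suc.prems(1)] by simp
    then have "T (i, j') \<le> T (i, j)" using Suc False by simp
    also have "\<dots> \<le> T (i, Suc j)" using assms(1) cell Suc.prems(1) by (simp add: is_ssyt_def)
    finally show ?thesis .
  qed simp
qed simp

lemma ssyt_pos_below_first_row:
  assumes "is_partition_of lam N" "is_ssyt lam T" "(Suc i, j) \<in> young_cells lam"
  shows "0 < T (Suc i, j)"
proof -
  have "(i, j) \<in> young_cells lam" using young_cells_up_closed[OF assms(1,3)] by simp
  then have "T (i, j) < T (Suc i, j)" using assms(2,3) by (simp add: is_ssyt_def)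
  then show ?thesis by simp
qed

lemma ssyt_zeros:
  assumes P: "is_partition_of lam N" and T: "is_ssyt lam T"
    and content: "\<forall>x. fibre_card (young_cells lam) T x = \<alpha> x"
  shows "{c\<in>young_cells lam. T c = 0} = {0} \<times> {..<\<alpha> 0}"
proof -
  let ?Y = "young_cells lam"
  define J where "J = {j. (0, j) \<in> ?Y \<and> T (0, j) = 0}"
  have zeros: "{c\<in>?Y. T c = 0} = {0} \<times> J"
  proof (intro equalityI subsetI)
    fix c assume c: "c \<in> {c\<in>?Y. T c = 0}"
    obtain i j where "c = (i, j)" by fastforce
    moreover have "i = 0"
      using c ssyt_pos_below_first_row[OF P T] \<open>c = (i, j)\<close> by (cases i) fastforce+
    ultimately show "c \<in> {0} \<times> J" using c by (simp add: J_def)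
  qed (auto simp: J_def)
  have "J \<subseteq> snd ` ?Y" by (force simp: J_def)
  then have "finite J" using finite_young_cells finite_surj by blast
  moreover have "j' \<in> J" if "j \<in> J" "j' \<le> j" for j j'
    using that young_cells_left_closed ssyt_row_mono[OF T] by (fastforce simp: J_def)
  ultimately have "J = {..<card J}" by (rule down_closed_eq_lessThan)
  moreover have "card J = \<alpha> 0"
    using content[rule_format, of 0] zeros by (simp add: card_cartesian_product)
  ultimately show ?thesis using zeros by simp
qed

lemma ssyt_second_row_ge_2:
  assumes P: "is_partition_of lam N" and T: "is_ssyt lam T"
    and content: "\<forall>x. fibre_card (young_cells lam) T x = \<alpha> x"
    and a: "\<alpha> 1 \<le> a" and cell: "(1, a) \<in> young_cells lam"
  shows "2 \<le> T (1, a)"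
proof (rule ccontr)
  let ?Y = "young_cells lam"
  assume "\<not> 2 \<le> T (1, a)"
  have "(1, j) \<in> ?Y \<and> T (1, j) = 1" if "j \<le> a" for j
  proof -
    have "(1, j) \<in> ?Y" "T (1, j) \<le> T (1, a)"
      using that young_cells_left_closed[OF cell] ssyt_row_mono[OF T cell] by auto
    moreover have "0 < T (Suc 0, j)" using ssyt_pos_below_first_row[OF P T] \<open>(1, j) \<in> ?Y\<close> by simp
    ultimately show ?thesis using \<open>\<not> 2 \<le> T (1, a)\<close> by simp
  qed
  then have "{1} \<times> {..a} \<subseteq> {c\<in>?Y. T c = 1}" by auto
  then have "card ({1::nat} \<times> {..a}) \<le> fibre_card ?Y T 1"
    by (rule card_mono[rotated]) (simp add: finite_young_cells)
  then show False using content a by (simp add: card_cartesian_product)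
qed

lemma ssyt_last_zero:
  assumes "is_partition_of lam N" "is_ssyt lam T"
    and "\<forall>x. fibre_card (young_cells lam) T x = \<alpha> x" and "\<alpha> 0 = Suc a"
  shows "(0, a) \<in> young_cells lam" "T (0, a) = 0"
    and "(0, Suc a) \<in> young_cells lam \<Longrightarrow> 0 < T (0, Suc a)"
proof -
  have zeros: "{c\<in>young_cells lam. T c = 0} = {0} \<times> {..<Suc a}"
    using ssyt_zeros[OF assms(1-3)] assms(4) by simp
  have "(0, a) \<in> {c\<in>young_cells lam. T c = 0}" "(0, Suc a) \<notin> {c\<in>young_cells lam. T c = 0}"
    unfolding zeros by auto
  then show "(0, a) \<in> young_cells lam" "T (0, a) = 0"
    and "(0, Suc a) \<in> young_cells lam \<Longrightarrow> 0 < T (0, Suc a)"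
    by auto
qed

lemma ssyt_relabel_last_zero:
  assumes P: "is_partition_of lam N" and T: "is_ssyt lam T"
    and content: "\<forall>x. fibre_card (young_cells lam) T x = \<alpha> x"
    and a: "\<alpha> 0 = Suc a" "\<alpha> 1 \<le> a"
  shows "is_ssyt lam (T((0, a) := 1))"
    and "fibre_card (young_cells lam) (T((0, a) := 1)) x = transfer_0_1 \<alpha> x"
proof -
  let ?Y = "young_cells lam" and ?T' = "T((0, a) := 1)"
  note last_zero = ssyt_last_zero[OF P T content a(1)]
  have "?T' \<in> extensional ?Y"
    using T last_zero(1) by (simp add: is_ssyt_def extensional_def)
  moreover have "?T' (i, j) \<le> ?T' (i, Suc j)" if "(i, j) \<in> ?Y" "(i, Suc j) \<in> ?Y" for i j
  proof -
    have "T (i, j) \<le> T (i, Suc j)" using T that by (simp add: is_ssyt_def)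
    then show ?thesis
      using last_zero that by (cases "(i, j) = (0, a)"; cases "(i, Suc j) = (0, a)") auto
  qed
  moreover have "?T' (i, j) < ?T' (Suc i, j)" if "(i, j) \<in> ?Y" "(Suc i, j) \<in> ?Y" for i j
  proof -
    have "T (i, j) < T (Suc i, j)" using T that by (simp add: is_ssyt_def)
    then show ?thesis
      using ssyt_second_row_ge_2[OF P T content a(2)] that by (cases "(i, j) = (0, a)") auto
  qed
  ultimately show "is_ssyt lam ?T'" by (simp add: is_ssyt_def)
  have "{c\<in>?Y. ?T' c = x} =
      (if x = 0 then {c\<in>?Y. T c = 0} - {(0, a)}
       else if x = 1 then insert (0, a) {c\<in>?Y. T c = 1} else {c\<in>?Y. T c = x})"
    using last_zero(1,2) by auto
  then show "fibre_card ?Y ?T' x = transfer_0_1 \<alpha> x"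
    using content last_zero(1,2) a(1) finite_young_cells[of lam] by (simp add: transfer_0_1_apply)
qed

lemma kostka_le_kostka_transfer_0_1:
  assumes P: "is_partition_of lam N" and less: "\<alpha> 1 < \<alpha> 0"
  shows "kostka lam \<alpha> \<le> kostka lam (transfer_0_1 \<alpha>)"
proof -
  obtain a where a: "\<alpha> 0 = Suc a" "\<alpha> 1 \<le> a" using less by (cases "\<alpha> 0") auto
  let ?Y = "young_cells lam"
  let ?A = "{T. is_ssyt lam T \<and> (\<forall>x. fibre_card ?Y T x = \<alpha> x)}"
  let ?B = "{T. is_ssyt lam T \<and> (\<forall>x. fibre_card ?Y T x = transfer_0_1 \<alpha> x)}"
  define relabel where "relabel T = T((0, a) := 1)" for T :: "nat \<times> nat \<Rightarrow> nat"
  have undo: "(relabel T)((0, a) := 0) = T" if "T \<in> ?A" for T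
  proof -
    have "(relabel T)((0, a) := 0) = T((0, a) := 0)" by (simp add: relabel_def)
    also have "\<dots> = T"
      using that ssyt_last_zero(2)[OF P, of T \<alpha> a] a(1) by (intro fun_upd_idem) simp
    finally show ?thesis .
  qed
  have "inj_on relabel ?A"
  proof (rule inj_onI)
    fix T T' assume "T \<in> ?A" "T' \<in> ?A" "relabel T = relabel T'"
    then show "T = T'" using undo[of T] undo[of T'] by argo
  qed
  moreover have "relabel ` ?A \<subseteq> ?B"
    using ssyt_relabel_last_zero[OF P _ _ a] by (auto simp: relabel_def)
  moreover have "finite ?B"
    using finite_extensional_with_fibre_cards[OF finite_young_cells, of lam "transfer_0_1 \<alpha>"]
    by (rule finite_subset[rotated]) (auto simp: is_ssyt_def)
  ultimately show ?thesis unfolding kostka_def by (rule card_inj_on_le)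
qed

lemma schur_positive_csf_coeff_le_transfer_0_1:
  assumes "schur_positive V E" and less: "\<alpha> 1 < \<alpha> 0"
  shows "csf_coeff V E \<alpha> \<le> csf_coeff V E (transfer_0_1 \<alpha>)"
proof -
  let ?P = "{lam. is_partition_of lam (card V)}"
  obtain c :: "nat list \<Rightarrow> int" where
    c_nonneg: "\<And>lam. lam \<in> ?P \<Longrightarrow> 0 \<le> c lam" and
    expansion: "\<And>\<gamma>. int (csf_coeff V E \<gamma>) = (\<Sum>lam\<in>?P. c lam * int (kostka lam \<gamma>))"
    using assms(1) unfolding schur_positive_def by blast
  have "int (csf_coeff V E \<alpha>) = (\<Sum>lam\<in>?P. c lam * int (kostka lam \<alpha>))" by (rule expansion)
  also have "\<dots> \<le> (\<Sum>lam\<in>?P. c lam * int (kostka lam (transfer_0_1 \<alpha>)))"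
    using c_nonneg kostka_le_kostka_transfer_0_1[OF _ less]
    by (intro sum_mono mult_left_mono) auto
  also have "\<dots> = int (csf_coeff V E (transfer_0_1 \<alpha>))" by (rule expansion[symmetric])
  finally show ?thesis by simp
qed

lemma card_le_csf_coeff:
  assumes "finite V" "inj_on F P"
    and "\<And>p. p \<in> P \<Longrightarrow> proper_coloring V E (F p) \<and> (\<forall>x. fibre_card V (F p) x = \<gamma> x)"
  shows "card P \<le> csf_coeff V E \<gamma>"
proof -
  let ?S = "{\<kappa>. proper_coloring V E \<kappa> \<and> (\<forall>x. fibre_card V \<kappa> x = \<gamma> x)}"
  have "finite ?S"
    using finite_extensional_with_fibre_cards[OF assms(1), of \<gamma>]
    by (rule finite_subset[rotated]) (auto simp: proper_coloring_def)
  moreover have "F ` P \<subseteq> ?S" using assms(3) by blast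
  ultimately show ?thesis unfolding csf_coeff_def using card_inj_on_le[OF assms(2)] by blast
qed

lemma csf_coeff_pos:
  assumes "finite V" "proper_coloring V E \<kappa>"
  shows "0 < csf_coeff V E (\<lambda>x. fibre_card V \<kappa> x)"
proof -
  have "card {()} \<le> csf_coeff V E (\<lambda>x. fibre_card V \<kappa> x)"
    by (rule card_le_csf_coeff[of V "\<lambda>_. \<kappa>"]) (use assms in auto)
  then show ?thesis by simp
qed

definition proper_cycle_coloring :: "nat \<Rightarrow> (nat \<Rightarrow> 'b) \<Rightarrow> bool" where
  "proper_cycle_coloring m g \<longleftrightarrow> (\<forall>i<m. g i \<noteq> g (Suc i mod m))"

lemma proper_cycle_coloring_class_le:
  assumes "proper_cycle_coloring m g"
  shows "2 * fibre_card {..<m} g c \<le> m"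
proof -
  let ?S = "{i\<in>{..<m}. g i = c}"
  define next_vertex where "next_vertex i = Suc i mod m" for i
  have next_vertex_eq: "next_vertex i = (if Suc i = m then 0 else Suc i)" if "i < m" for i
    using that by (simp add: next_vertex_def)
  have "inj_on next_vertex ?S"
    by (rule inj_onI) (simp add: next_vertex_eq split: if_splits)
  then have "card (next_vertex ` ?S) = card ?S" by (rule card_image)
  moreover have "?S \<inter> next_vertex ` ?S = {}"
    using assms by (auto simp: proper_cycle_coloring_def next_vertex_def)
  moreover have "?S \<union> next_vertex ` ?S \<subseteq> {..<m}"
    by (auto simp: next_vertex_def)
  then have "card (?S \<union> next_vertex ` ?S) \<le> m" by (metis card_lessThan card_mono finite_lessThan)
  ultimately show ?thesis by (simp add: card_Un_disjoint)
qed

lemma proper_cycle_coloring_binary_classes: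
  fixes g :: "nat \<Rightarrow> nat"
  assumes "proper_cycle_coloring m g"
    and "card {i\<in>{..<m}. g i \<notin> {0, 1}} + 2 * k = m" and "m \<le> 2 * k + 1"
  shows "fibre_card {..<m} g 0 = k" "fibre_card {..<m} g 1 = k"
proof -
  let ?S0 = "{i\<in>{..<m}. g i = 0}" and ?S1 = "{i\<in>{..<m}. g i = 1}"
    and ?D = "{i\<in>{..<m}. g i \<notin> {0, 1}}"
  have "card ((?S0 \<union> ?S1) \<union> ?D) = card (?S0 \<union> ?S1) + card ?D"
    by (rule card_Un_disjoint) auto
  also have "card (?S0 \<union> ?S1) = card ?S0 + card ?S1"
    by (rule card_Un_disjoint) auto
  finally have "card ?S0 + card ?S1 + card ?D = card ((?S0 \<union> ?S1) \<union> ?D)" by simp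
  also have "(?S0 \<union> ?S1) \<union> ?D = {..<m}" by auto
  finally have "card ?S0 + card ?S1 + card ?D = m" by simp
  moreover have "2 * card ?S0 \<le> m" "2 * card ?S1 \<le> m"
    using proper_cycle_coloring_class_le[OF assms(1)] by blast+
  ultimately show "fibre_card {..<m} g 0 = k" "fibre_card {..<m} g 1 = k"
    using assms(2,3) by linarith+
qed

lemma two_colorings_of_path_eq:
  assumes "\<And>i. a \<le> i \<Longrightarrow> i < b \<Longrightarrow> f i \<noteq> f (Suc i) \<and> g i \<noteq> g (Suc i)"
    and "\<And>i. a \<le> i \<Longrightarrow> i \<le> b \<Longrightarrow> f i \<in> {c, d} \<and> g i \<in> {c, d}"
    and "f a = g a" and "a \<le> i" "i \<le> b"
  shows "f i = g i"
  using assms(4,5)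
proof (induction i rule: dec_induct)
  case (step i)
  then show ?case using assms(1,2)[of i] assms(2)[of "Suc i"] by auto
qed (use assms(3) in simp)

lemma proper_cycle_colorings_eq_off_0:
  assumes "proper_cycle_coloring m f" "proper_cycle_coloring m g"
    and binary: "\<And>i. 0 < i \<Longrightarrow> i < m \<Longrightarrow> f i \<in> {c, d} \<and> g i \<in> {c, d}"
    and "f 1 = g 1" and "0 < i" "i < m"
  shows "f i = g i"
proof (rule two_colorings_of_path_eq[of 1 "m - 1" f g c d i])
  show "f j \<noteq> f (Suc j) \<and> g j \<noteq> g (Suc j)" if "1 \<le> j" "j < m - 1" for j
  proof -
    have "j < m" "Suc j mod m = Suc j" using that by simp_all
    then show ?thesis using assms(1,2) unfolding proper_cycle_coloring_def by metis
  qed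
  show "f j \<in> {c, d} \<and> g j \<in> {c, d}" if "1 \<le> j" "j \<le> m - 1" for j
  proof -
    have "0 < j" "j < m" using that \<open>i < m\<close> by linarith+
    then show ?thesis by (rule binary)
  qed
qed (use assms(4-6) in simp_all)

lemma squid_vertices_eq: "squid_vertices m n = {..<m} \<union> {m..<m + n}"
  by (auto simp: squid_vertices_def)

lemma fibre_card_squid:
  "fibre_card (squid_vertices m n) \<kappa> x = fibre_card {..<m} \<kappa> x + fibre_card {m..<m + n} \<kappa> x"
  unfolding squid_vertices_eq by (rule fibre_card_Un) auto

lemma proper_coloring_squid_iff:
  assumes "0 < m"
  shows "proper_coloring (squid_vertices m n) (squid_adj m n) \<kappa> \<longleftrightarrow>
    \<kappa> \<in> extensional (squid_vertices m n) \<and> proper_cycle_coloring m \<kappa> \<and> (\<forall>l\<in>{m..<m + n}. \<kappa> l \<noteq> \<kappa> 0)"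
    (is "?proper \<longleftrightarrow> ?ext \<and> ?cycle \<and> ?leaves")
proof
  assume ?proper
  then have ne: "\<kappa> u \<noteq> \<kappa> v" if "u < m + n" "v < m + n" "squid_adj m n u v" for u v
    using that by (auto simp: proper_coloring_def squid_vertices_def)
  have "?cycle" unfolding proper_cycle_coloring_def
  proof (intro allI impI)
    fix i assume "i < m"
    moreover have "Suc i mod m < m + n" using assms by (simp add: trans_less_add1)
    ultimately show "\<kappa> i \<noteq> \<kappa> (Suc i mod m)" by (intro ne) (simp_all add: squid_adj_def)
  qed
  moreover have "?leaves"
  proof
    fix l assume "l \<in> {m..<m + n}"
    then show "\<kappa> l \<noteq> \<kappa> 0" using assms by (intro ne) (auto simp: squid_adj_def)
  qed
  ultimately show "?ext \<and> ?cycle \<and> ?leaves" using \<open>?proper\<close> by (simp add: proper_coloring_def)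
next
  assume R: "?ext \<and> ?cycle \<and> ?leaves"
  have "\<kappa> u \<noteq> \<kappa> v" if "u < m + n" "v < m + n" "squid_adj m n u v" for u v
    using that(3) R unfolding squid_adj_def proper_cycle_coloring_def
    by (elim disjE conjE) (use that(1,2) in \<open>fastforce+\<close>)
  then show ?proper using R by (auto simp: proper_coloring_def squid_vertices_def)
qed

definition squid_coloring :: "nat \<Rightarrow> nat \<Rightarrow> (nat \<Rightarrow> nat) \<Rightarrow> (nat \<Rightarrow> nat) \<Rightarrow> nat \<Rightarrow> nat" where
  "squid_coloring m n c l = restrict (\<lambda>v. if v < m then c v else l v) (squid_vertices m n)"

lemma proper_squid_coloring:
  assumes "0 < m" "proper_cycle_coloring m c" "\<forall>v\<in>{m..<m + n}. l v \<noteq> c 0"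
  shows "proper_coloring (squid_vertices m n) (squid_adj m n) (squid_coloring m n c l)"
proof -
  have "Suc i mod m < m" "Suc i mod m < m + n" for i using assms(1) by (simp_all add: trans_less_add1)
  then show ?thesis
    using assms unfolding proper_coloring_squid_iff[OF assms(1)]
    by (simp add: squid_coloring_def proper_cycle_coloring_def squid_vertices_def)
qed

lemma fibre_card_squid_coloring:
  "fibre_card (squid_vertices m n) (squid_coloring m n c l) x =
     fibre_card {..<m} c x + fibre_card {m..<m + n} l x"
proof -
  have "{v\<in>{..<m}. squid_coloring m n c l v = x} = {v\<in>{..<m}. c v = x}"
    "{v\<in>{m..<m + n}. squid_coloring m n c l v = x} = {v\<in>{m..<m + n}. l v = x}"
    by (auto simp: squid_coloring_def squid_vertices_def)
  then show ?thesis by (simp only: fibre_card_squid)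
qed

lemma csf_coeff_squid_pos:
  assumes "0 < m" "proper_cycle_coloring m c" "\<forall>v\<in>{m..<m + n}. l v \<noteq> c 0"
  shows "0 < csf_coeff (squid_vertices m n) (squid_adj m n)
      (\<lambda>x. fibre_card {..<m} c x + fibre_card {m..<m + n} l x)"
proof -
  have "finite (squid_vertices m n)" by (simp add: squid_vertices_def)
  from csf_coeff_pos[OF this proper_squid_coloring[OF assms]] show ?thesis
    by (simp only: fibre_card_squid_coloring)
qed

lemma squid_center_class_le:
  assumes "0 < m" "proper_coloring (squid_vertices m n) (squid_adj m n) \<kappa>"
  shows "2 * fibre_card (squid_vertices m n) \<kappa> (\<kappa> 0) \<le> m"
proof -
  have "{l\<in>{m..<m + n}. \<kappa> l = \<kappa> 0} = {}"
    using assms by (simp add: proper_coloring_squid_iff)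
  then have "fibre_card (squid_vertices m n) \<kappa> (\<kappa> 0) = fibre_card {..<m} \<kappa> (\<kappa> 0)"
    by (simp add: fibre_card_squid)
  then show ?thesis
    using assms proper_cycle_coloring_class_le by (simp add: proper_coloring_squid_iff)
qed

lemma csf_coeff_squid_eq_0:
  assumes "0 < m" and large: "\<And>x. \<gamma> x \<noteq> 0 \<Longrightarrow> m < 2 * \<gamma> x"
  shows "csf_coeff (squid_vertices m n) (squid_adj m n) \<gamma> = 0"
proof -
  have False if \<kappa>: "proper_coloring (squid_vertices m n) (squid_adj m n) \<kappa>"
    and content: "\<forall>x. fibre_card (squid_vertices m n) \<kappa> x = \<gamma> x" for \<kappa>
  proof -
    have "0 < \<gamma> (\<kappa> 0)"
      using fibre_card_pos[of "squid_vertices m n" 0 \<kappa>] content assms(1)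
      by (simp add: squid_vertices_def)
    then show False using large[of "\<kappa> 0"] squid_center_class_le[OF assms(1) \<kappa>] content by simp
  qed
  then have "{\<kappa>. proper_coloring (squid_vertices m n) (squid_adj m n) \<kappa> \<and>
      (\<forall>x. fibre_card (squid_vertices m n) \<kappa> x = \<gamma> x)} = {}" by blast
  then show ?thesis unfolding csf_coeff_def by (simp only: card.empty)
qed

lemma proper_cycle_coloring_even:
  assumes "even m"
  shows "proper_cycle_coloring m (\<lambda>v. Suc v mod 2)"
  unfolding proper_cycle_coloring_def
proof (intro allI impI)
  fix i assume "i < m"
  then consider "Suc i < m" | "Suc i = m" by linarith
  then show "Suc i mod 2 \<noteq> Suc (Suc i mod m) mod 2"
  proof cases
    case 1
    then show ?thesis by simp presburger
  next
    case 2
    then show ?thesis using assms by auto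
  qed
qed

lemma fibre_card_even_cycle_coloring:
  assumes "m = 2 * k"
  shows "fibre_card {..<m} (\<lambda>v. Suc v mod 2) x = (if x < 2 then k else 0)"
proof -
  have "{i\<in>{..<m}. Suc i mod 2 \<notin> {0, 1::nat}} = {}" by auto
  then have "fibre_card {..<m} (\<lambda>v. Suc v mod 2) 0 = k" "fibre_card {..<m} (\<lambda>v. Suc v mod 2) 1 = k"
    using proper_cycle_coloring_binary_classes[OF proper_cycle_coloring_even, of m k] assms by auto
  moreover have "{i\<in>{..<m}. Suc i mod 2 = x} = {}" if "2 \<le> x" using that by auto
  ultimately show ?thesis by (cases "x < 2") (auto simp: less_2_cases_iff)
qed

text \<open>Color 2 at \<open>p\<close>; colors 0 and 1 alternate along the path \<open>p+1, ..., m-1, 0, ..., p-1\<close>,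
  which has even length when \<open>m\<close> is odd.\<close>

definition odd_cycle_coloring :: "nat \<Rightarrow> nat \<Rightarrow> nat" where
  "odd_cycle_coloring p v = (if v = p then 2 else if v < p then Suc v mod 2 else v mod 2)"

lemma odd_cycle_coloring_binary: "v \<noteq> p \<Longrightarrow> odd_cycle_coloring p v \<in> {0, 1}"
  by (auto simp: odd_cycle_coloring_def)

lemma odd_cycle_coloring_eq_2_iff: "odd_cycle_coloring p v = 2 \<longleftrightarrow> v = p"
proof (cases "v = p")
  case False
  then show ?thesis using odd_cycle_coloring_binary[OF False] by auto
qed (simp add: odd_cycle_coloring_def)

lemma proper_cycle_coloring_odd:
  assumes "odd m" "1 < m" "p < m"
  shows "proper_cycle_coloring m (odd_cycle_coloring p)"
  unfolding proper_cycle_coloring_def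
proof (intro allI impI)
  fix i assume "i < m"
  then consider "Suc i < m" "i = p \<or> Suc i = p" | "Suc i < m" "i \<noteq> p" "Suc i \<noteq> p" | "Suc i = m"
    by linarith
  then show "odd_cycle_coloring p i \<noteq> odd_cycle_coloring p (Suc i mod m)"
  proof cases
    case 1
    then show ?thesis using odd_cycle_coloring_eq_2_iff[of p i] odd_cycle_coloring_eq_2_iff[of p "Suc i"]
      by auto
  next
    case 2
    then show ?thesis by (simp add: odd_cycle_coloring_def) presburger
  next
    case 3
    then show ?thesis using assms by (auto simp: odd_cycle_coloring_def)
  qed
qed

lemma fibre_card_odd_cycle_coloring:
  assumes "m = 2 * k + 1" "0 < k" "p < m"
  shows "fibre_card {..<m} (odd_cycle_coloring p) x = (if x < 2 then k else if x = 2 then 1 else 0)"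
proof -
  have proper: "proper_cycle_coloring m (odd_cycle_coloring p)"
    using assms by (intro proper_cycle_coloring_odd) auto
  have twos: "{i\<in>{..<m}. odd_cycle_coloring p i = 2} = {p}"
    using assms(3) by (auto simp: odd_cycle_coloring_eq_2_iff)
  have "{i\<in>{..<m}. odd_cycle_coloring p i \<notin> {0, 1}} = {p}"
    using assms(3) odd_cycle_coloring_binary odd_cycle_coloring_eq_2_iff[of p p] by fastforce
  then have "fibre_card {..<m} (odd_cycle_coloring p) 0 = k" "fibre_card {..<m} (odd_cycle_coloring p) 1 = k"
    using proper_cycle_coloring_binary_classes[OF proper, of k] assms(1) by auto
  moreover have "{i\<in>{..<m}. odd_cycle_coloring p i = x} = {}" if "2 < x"
  proof -
    have "odd_cycle_coloring p i \<noteq> x" for i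
      using that odd_cycle_coloring_binary[of i p] odd_cycle_coloring_eq_2_iff[of p i] by auto
    then show ?thesis by simp
  qed
  ultimately show ?thesis using twos by (auto simp: less_2_cases_iff)
qed

lemma squid_even_not_schur_positive:
  assumes m: "m = 2 * k" and "0 < k" "2 \<le> n"
  shows "\<not> schur_positive (squid_vertices m n) (squid_adj m n)"
proof
  assume sp: "schur_positive (squid_vertices m n) (squid_adj m n)"
  define \<alpha> where "\<alpha> x = fibre_card {..<m} (\<lambda>v. Suc v mod 2) x + fibre_card {m..<m + n} (\<lambda>_. 0) x"
    for x
  have \<alpha>: "\<alpha> x = (if x = 0 then k + n else if x = 1 then k else 0)" for x
    unfolding \<alpha>_def fibre_card_even_cycle_coloring[OF m] fibre_card_const by simp
  have "0 < csf_coeff (squid_vertices m n) (squid_adj m n) \<alpha>"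
    unfolding \<alpha>_def using assms
    by (intro csf_coeff_squid_pos proper_cycle_coloring_even) auto
  moreover have "csf_coeff (squid_vertices m n) (squid_adj m n) (transfer_0_1 \<alpha>) = 0"
  proof (rule csf_coeff_squid_eq_0)
    fix x assume "transfer_0_1 \<alpha> x \<noteq> 0"
    then show "m < 2 * transfer_0_1 \<alpha> x" using assms by (auto simp: transfer_0_1_apply \<alpha> split: if_splits)
  qed (use assms in simp)
  ultimately show False
    using schur_positive_csf_coeff_le_transfer_0_1[OF sp, of \<alpha>] assms by (simp add: \<alpha>)
qed

lemma squid_odd_many_leaves_not_schur_positive:
  assumes m: "m = 2 * k + 1" and "0 < k" "k + 2 \<le> n"
  shows "\<not> schur_positive (squid_vertices m n) (squid_adj m n)"
proof
  assume sp: "schur_positive (squid_vertices m n) (squid_adj m n)"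
  define leaf where "leaf v = (if v < m + k then 2 else 0 :: nat)" for v
  define \<alpha> where "\<alpha> x = fibre_card {..<m} (odd_cycle_coloring (m - 1)) x + fibre_card {m..<m + n} leaf x"
    for x
  have cycle: "fibre_card {..<m} (odd_cycle_coloring (m - 1)) x = (if x < 2 then k else if x = 2 then 1 else 0)"
    for x using fibre_card_odd_cycle_coloring[OF m \<open>0 < k\<close>] m by simp
  have "{v\<in>{m..<m + n}. leaf v = x} = (if x = 2 then {m..<m + k} else if x = 0 then {m + k..<m + n} else {})"
    for x using assms by (auto simp: leaf_def)
  then have leaves: "fibre_card {m..<m + n} leaf x = (if x = 2 then k else if x = 0 then n - k else 0)"
    for x by simp
  have \<alpha>: "\<alpha> x = (if x = 0 then n else if x = 1 then k else if x = 2 then k + 1 else 0)" for x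
    using assms unfolding \<alpha>_def cycle leaves by simp
  have "odd_cycle_coloring (m - 1) 0 = 1" using assms by (simp add: odd_cycle_coloring_def)
  then have "0 < csf_coeff (squid_vertices m n) (squid_adj m n) \<alpha>"
    unfolding \<alpha>_def using assms
    by (intro csf_coeff_squid_pos proper_cycle_coloring_odd) (auto simp: leaf_def)
  moreover have "csf_coeff (squid_vertices m n) (squid_adj m n) (transfer_0_1 \<alpha>) = 0"
  proof (rule csf_coeff_squid_eq_0)
    fix x assume "transfer_0_1 \<alpha> x \<noteq> 0"
    then show "m < 2 * transfer_0_1 \<alpha> x" using assms by (auto simp: transfer_0_1_apply \<alpha> split: if_splits)
  qed (use assms in simp)
  ultimately show False
    using schur_positive_csf_coeff_le_transfer_0_1[OF sp, of \<alpha>] assms by (simp add: \<alpha>)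
qed

lemma squid_odd_coloring_structure:
  fixes k n :: nat
  defines "\<beta> \<equiv> \<lambda>x. if x = 0 then k + n - 1 else if x = 1 then k + 1 else if x = 2 then 1 else 0"
  assumes m: "m = 2 * k + 1" and n: "2 \<le> n"
    and proper: "proper_coloring (squid_vertices m n) (squid_adj m n) \<kappa>"
    and content: "\<forall>x. fibre_card (squid_vertices m n) \<kappa> x = \<beta> x"
  shows "\<kappa> 0 = 2" and "\<And>v. v \<in> squid_vertices m n \<Longrightarrow> v \<noteq> 0 \<Longrightarrow> \<kappa> v \<in> {0, 1}"
    and "\<exists>l\<in>{m..<m + n}. {v\<in>{m..<m + n}. \<kappa> v = 1} = {l}"
proof -
  have center: "0 \<in> squid_vertices m n" using m by (simp add: squid_vertices_def)
  have color_range: "\<kappa> v \<in> {0, 1, 2}" if "v \<in> squid_vertices m n" for v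
    using fibre_card_pos[of "squid_vertices m n" v \<kappa>] that content
    by (simp add: squid_vertices_def \<beta>_def split: if_splits)
  have "2 * fibre_card (squid_vertices m n) \<kappa> (\<kappa> 0) \<le> m"
    using m proper by (intro squid_center_class_le) auto
  then show center_2: "\<kappa> 0 = 2" using color_range[OF center] content m n by (auto simp: \<beta>_def)
  have "fibre_card (squid_vertices m n) \<kappa> 2 = 1" using content by (simp add: \<beta>_def)
  then obtain w where "{v\<in>squid_vertices m n. \<kappa> v = 2} = {w}" by (rule card_1_singletonE)
  moreover have "0 \<in> {v\<in>squid_vertices m n. \<kappa> v = 2}" using center center_2 by simp
  ultimately have twos: "{v\<in>squid_vertices m n. \<kappa> v = 2} = {0}" by simp
  show binary: "\<kappa> v \<in> {0, 1}" if "v \<in> squid_vertices m n" "v \<noteq> 0" for v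
  proof -
    have "v \<notin> {v\<in>squid_vertices m n. \<kappa> v = 2}" unfolding twos using that(2) by simp
    then have "\<kappa> v \<noteq> 2" using that(1) by simp
    then show ?thesis using color_range[OF that(1)] by simp
  qed
  have "{i\<in>{..<m}. \<kappa> i \<notin> {0, 1}} = {0}"
  proof (intro equalityI subsetI)
    fix i assume "i \<in> {i\<in>{..<m}. \<kappa> i \<notin> {0, 1}}"
    then show "i \<in> {0}" using binary[of i] by (auto simp: squid_vertices_def)
  qed (use center_2 m in simp)
  then have "fibre_card {..<m} \<kappa> 1 = k"
    using proper_cycle_coloring_binary_classes(2)[of m \<kappa> k] proper m
    by (simp add: proper_coloring_squid_iff)
  then have "fibre_card {m..<m + n} \<kappa> 1 = 1"
    using content fibre_card_squid[of m n \<kappa> 1] by (simp add: \<beta>_def)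
  then obtain l where l: "{v\<in>{m..<m + n}. \<kappa> v = 1} = {l}" by (rule card_1_singletonE)
  then show "\<exists>l\<in>{m..<m + n}. {v\<in>{m..<m + n}. \<kappa> v = 1} = {l}" by blast
qed

lemma squid_odd_coloring_eqI:
  fixes k n :: nat
  defines "\<beta> \<equiv> \<lambda>x. if x = 0 then k + n - 1 else if x = 1 then k + 1 else if x = 2 then 1 else 0"
  assumes m: "m = 2 * k + 1" and "0 < k" "2 \<le> n"
    and proper: "proper_coloring (squid_vertices m n) (squid_adj m n) \<kappa>"
      "proper_coloring (squid_vertices m n) (squid_adj m n) \<kappa>'"
    and content: "\<forall>x. fibre_card (squid_vertices m n) \<kappa> x = \<beta> x"
      "\<forall>x. fibre_card (squid_vertices m n) \<kappa>' x = \<beta> x"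
    and first: "\<kappa> 1 = \<kappa>' 1" and ones: "{l\<in>{m..<m + n}. \<kappa> l = 1} = {l\<in>{m..<m + n}. \<kappa>' l = 1}"
  shows "\<kappa> = \<kappa>'"
proof
  fix v
  have m0: "0 < m" using m by simp
  note \<kappa> = squid_odd_coloring_structure[OF m \<open>2 \<le> n\<close> proper(1) content(1)[unfolded \<beta>_def]]
    and \<kappa>' = squid_odd_coloring_structure[OF m \<open>2 \<le> n\<close> proper(2) content(2)[unfolded \<beta>_def]]
  consider "v \<notin> squid_vertices m n" | "v = 0" | "0 < v" "v < m" | "v \<in> {m..<m + n}"
    unfolding squid_vertices_def by (metis atLeastLessThan_iff lessThan_iff linorder_not_le not_gr0)
  then show "\<kappa> v = \<kappa>' v"
  proof cases
    case 1
    have "\<kappa> \<in> extensional (squid_vertices m n)" "\<kappa>' \<in> extensional (squid_vertices m n)"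
      using proper by (simp_all add: proper_coloring_def)
    then show ?thesis using 1 extensional_arb by metis
  next
    case 2
    then show ?thesis using \<kappa>(1) \<kappa>'(1) by (simp only:)
  next
    case 3
    have "proper_cycle_coloring m \<kappa>" "proper_cycle_coloring m \<kappa>'"
      using proper by (simp_all add: proper_coloring_squid_iff[OF m0])
    moreover have "\<kappa> i \<in> {0, 1} \<and> \<kappa>' i \<in> {0, 1}" if "0 < i" "i < m" for i
      using that \<kappa>(2)[of i] \<kappa>'(2)[of i] m by (simp add: squid_vertices_def)
    ultimately show ?thesis using first 3 by (rule proper_cycle_colorings_eq_off_0)
  next
    case 4
    have "v \<in> {l\<in>{m..<m + n}. \<kappa> l = 1} \<longleftrightarrow> v \<in> {l\<in>{m..<m + n}. \<kappa>' l = 1}"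
      by (simp only: ones)
    then have "\<kappa> v = 1 \<longleftrightarrow> \<kappa>' v = 1" using 4 by simp
    moreover have "\<kappa> v \<in> {0, 1}" "\<kappa>' v \<in> {0, 1}"
      using 4 m \<kappa>(2)[of v] \<kappa>'(2)[of v] by (simp_all add: squid_vertices_def)
    ultimately show ?thesis by auto
  qed
qed

lemma csf_coeff_squid_odd_le:
  fixes k n :: nat
  defines "\<beta> \<equiv> \<lambda>x. if x = 0 then k + n - 1 else if x = 1 then k + 1 else if x = 2 then 1 else 0"
  assumes m: "m = 2 * k + 1" and "0 < k" "2 \<le> n"
  shows "csf_coeff (squid_vertices m n) (squid_adj m n) \<beta> \<le> 2 * n"
proof -
  let ?S = "{\<kappa>. proper_coloring (squid_vertices m n) (squid_adj m n) \<kappa> \<and>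
    (\<forall>x. fibre_card (squid_vertices m n) \<kappa> x = \<beta> x)}"
  let ?L = "{m..<m + n}"
  define signature where "signature \<kappa> = (\<kappa> 1, {l\<in>?L. \<kappa> l = 1})" for \<kappa> :: "nat \<Rightarrow> nat"
  have "inj_on signature ?S"
  proof (rule inj_onI)
    fix \<kappa> \<kappa>' assume "\<kappa> \<in> ?S" "\<kappa>' \<in> ?S" "signature \<kappa> = signature \<kappa>'"
    then show "\<kappa> = \<kappa>'"
      by (intro squid_odd_coloring_eqI[OF m \<open>0 < k\<close> \<open>2 \<le> n\<close>]) (simp_all add: signature_def \<beta>_def)
  qed
  moreover have "signature ` ?S \<subseteq> {0, 1} \<times> (\<lambda>l. {l}) ` ?L"
  proof (rule image_subsetI)
    fix \<kappa> assume "\<kappa> \<in> ?S"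
    then have "proper_coloring (squid_vertices m n) (squid_adj m n) \<kappa>"
      "\<forall>x. fibre_card (squid_vertices m n) \<kappa> x =
         (if x = 0 then k + n - 1 else if x = 1 then k + 1 else if x = 2 then 1 else 0)"
      by (simp_all add: \<beta>_def)
    note shape = squid_odd_coloring_structure[OF m \<open>2 \<le> n\<close> this]
    have "\<kappa> 1 \<in> {0, 1}" using shape(2)[of 1] m \<open>0 < k\<close> by (simp add: squid_vertices_def)
    moreover have "{l\<in>?L. \<kappa> l = 1} \<in> (\<lambda>l. {l}) ` ?L" using shape(3) by auto
    ultimately show "signature \<kappa> \<in> {0, 1} \<times> (\<lambda>l. {l}) ` ?L" by (simp add: signature_def)
  qed
  moreover have "finite ({0, 1::nat} \<times> (\<lambda>l. {l}) ` ?L)" by simp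
  ultimately have "card ?S \<le> card ({0, 1::nat} \<times> (\<lambda>l. {l}) ` ?L)" by (rule card_inj_on_le)
  also have "\<dots> = 2 * n" by (simp add: card_cartesian_product card_image)
  finally show ?thesis unfolding csf_coeff_def .
qed

lemma csf_coeff_squid_odd_ge:
  fixes k n :: nat
  defines "\<alpha> \<equiv> \<lambda>x. if x = 0 then k + n else if x = 1 then k else if x = 2 then 1 else 0"
  assumes m: "m = 2 * k + 1" and "0 < k"
  shows "m \<le> csf_coeff (squid_vertices m n) (squid_adj m n) \<alpha>"
proof -
  define F where "F p = squid_coloring m n (odd_cycle_coloring p) (\<lambda>_. 0)" for p
  have "inj_on F {..<m}"
  proof (rule inj_onI)
    fix p q assume "p \<in> {..<m}" "q \<in> {..<m}" "F p = F q"
    moreover have "F r p = odd_cycle_coloring r p" for r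
      using \<open>p \<in> {..<m}\<close> by (simp add: F_def squid_coloring_def squid_vertices_def)
    ultimately have "odd_cycle_coloring q p = 2" by (metis odd_cycle_coloring_eq_2_iff)
    then show "p = q" by (simp add: odd_cycle_coloring_eq_2_iff)
  qed
  moreover have "proper_coloring (squid_vertices m n) (squid_adj m n) (F p) \<and>
      (\<forall>x. fibre_card (squid_vertices m n) (F p) x = \<alpha> x)" if "p < m" for p
  proof
    have "odd_cycle_coloring p 0 \<noteq> 0" by (simp add: odd_cycle_coloring_def)
    then show "proper_coloring (squid_vertices m n) (squid_adj m n) (F p)"
      unfolding F_def using that m \<open>0 < k\<close>
      by (intro proper_squid_coloring proper_cycle_coloring_odd) auto
    show "\<forall>x. fibre_card (squid_vertices m n) (F p) x = \<alpha> x"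
      unfolding F_def fibre_card_squid_coloring fibre_card_odd_cycle_coloring[OF m \<open>0 < k\<close> that]
        fibre_card_const \<alpha>_def by simp
  qed
  ultimately show ?thesis
    using card_le_csf_coeff[of "squid_vertices m n" F "{..<m}"] by (simp add: squid_vertices_def)
qed

lemma squid_odd_few_leaves_not_schur_positive:
  assumes m: "m = 2 * k + 1" and "2 \<le> n" "n \<le> k"
  shows "\<not> schur_positive (squid_vertices m n) (squid_adj m n)"
proof
  assume sp: "schur_positive (squid_vertices m n) (squid_adj m n)"
  have "0 < k" using assms by simp
  define \<alpha> :: "nat \<Rightarrow> nat" where
    "\<alpha> x = (if x = 0 then k + n else if x = 1 then k else if x = 2 then 1 else 0)" for x
  have "m \<le> csf_coeff (squid_vertices m n) (squid_adj m n) \<alpha>"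
    using csf_coeff_squid_odd_ge[OF m \<open>0 < k\<close>, of n] by (simp add: \<alpha>_def [abs_def])
  moreover have "transfer_0_1 \<alpha> =
      (\<lambda>x. if x = 0 then k + n - 1 else if x = 1 then k + 1 else if x = 2 then 1 else 0)"
    by (auto simp: transfer_0_1_apply \<alpha>_def)
  then have "csf_coeff (squid_vertices m n) (squid_adj m n) (transfer_0_1 \<alpha>) \<le> 2 * n"
    using csf_coeff_squid_odd_le[OF m \<open>0 < k\<close> \<open>2 \<le> n\<close>] by simp
  ultimately show False
    using schur_positive_csf_coeff_le_transfer_0_1[OF sp, of \<alpha>] assms by (simp add: \<alpha>_def)
qed

theorem theorem3p8:
  fixes m n :: nat
  assumes "3 \<le> m" and "2 \<le> n" and "m \<noteq> 2 * n - 1"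
  shows "\<not> schur_positive (squid_vertices m n) (squid_adj m n)"
proof (cases "even m")
  case True
  then obtain k where "m = 2 * k" by blast
  with assms show ?thesis using squid_even_not_schur_positive by simp
next
  case False
  then obtain k where m: "m = 2 * k + 1" using oddE by blast
  then consider "k + 2 \<le> n" | "2 \<le> n" "n \<le> k"
    using assms by linarith
  then show ?thesis
    by cases (use m assms squid_odd_many_leaves_not_schur_positive
      squid_odd_few_leaves_not_schur_positive in auto)
qed

end
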